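(* Let $C$ be a $4$-dimensional simple coalgebra over an algebraically closed field $\Bbbk$ of characteristic zero and $T:C\to C$ a coalgebra automorphism of finite order. If $\operatorname{Tr}(T)=0$, then $\operatorname{ord}(T)=2$. *)

theory Defs
  imports "HOL-Computational_Algebra.Polynomial"
begin

definition alg_closed :: "'k::field itself \<Rightarrow> bool" where
  "alg_closed _ \<longleftrightarrow> (\<forall>p::'k poly. degree p \<ge> 1 \<longrightarrow> (\<exists>x. poly p x = 0))"

text \<open>A finite-dimensional coalgebra is modelled on the coordinate space
  C = ('i \<Rightarrow> 'k) (basis e_i indexed by the finite type 'i), with
  C \<otimes> C = ('i \<Rightarrow> 'i \<Rightarrow> 'k) (basis e_j \<otimes> e_l).
  The comultiplication is given by structure constants
  \<Delta>(e_i) = \<Sum>j l. c i j l e_j \<otimes> e_l, the counit by \<epsilon>(e_i) = eps i.\<close>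

definition comul :: "('i::finite \<Rightarrow> 'i \<Rightarrow> 'i \<Rightarrow> 'k::field) \<Rightarrow> ('i \<Rightarrow> 'k) \<Rightarrow> ('i \<Rightarrow> 'i \<Rightarrow> 'k)" where
  "comul c x = (\<lambda>j l. \<Sum>i\<in>UNIV. x i * c i j l)"

definition counit :: "('i::finite \<Rightarrow> 'k::field) \<Rightarrow> ('i \<Rightarrow> 'k) \<Rightarrow> 'k" where
  "counit eps x = (\<Sum>i\<in>UNIV. x i * eps i)"

text \<open>Coassociativity (\<Delta>\<otimes>id)\<Delta> = (id\<otimes>\<Delta>)\<Delta> and counit laws
  (\<epsilon>\<otimes>id)\<Delta> = id = (id\<otimes>\<epsilon>)\<Delta>, written on basis vectors.\<close>
definition is_coalgebra :: "('i::finite \<Rightarrow> 'i \<Rightarrow> 'i \<Rightarrow> 'k::field) \<Rightarrow> ('i \<Rightarrow> 'k) \<Rightarrow> bool" where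
  "is_coalgebra c eps \<longleftrightarrow>
     (\<forall>i a b d. (\<Sum>j\<in>UNIV. c i j d * c j a b) = (\<Sum>l\<in>UNIV. c i a l * c l b d)) \<and>
     (\<forall>i l. (\<Sum>j\<in>UNIV. c i j l * eps j) = (if i = l then 1 else 0)) \<and>
     (\<forall>i j. (\<Sum>l\<in>UNIV. c i j l * eps l) = (if i = j then 1 else 0))"

definition is_subspace :: "('i \<Rightarrow> 'k::field) set \<Rightarrow> bool" where
  "is_subspace D \<longleftrightarrow> (\<lambda>_. 0) \<in> D \<and> (\<forall>x\<in>D. \<forall>y\<in>D. (\<lambda>i. x i + y i) \<in> D) \<and>
     (\<forall>a. \<forall>x\<in>D. (\<lambda>i. a * x i) \<in> D)"

text \<open>D \<otimes> D inside C \<otimes> C, for a subspace D: the span of all d \<otimes> e with d, e \<in> D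
  (scalars are absorbed since D is closed under scaling).\<close>
definition tensor_sq :: "('i::finite \<Rightarrow> 'k::field) set \<Rightarrow> ('i \<Rightarrow> 'i \<Rightarrow> 'k) set" where
  "tensor_sq D = {t. \<exists>F. finite F \<and> F \<subseteq> D \<times> D \<and>
                      t = (\<lambda>j l. \<Sum>(d, e)\<in>F. d j * e l)}"

definition is_subcoalgebra :: "('i::finite \<Rightarrow> 'i \<Rightarrow> 'i \<Rightarrow> 'k::field) \<Rightarrow> ('i \<Rightarrow> 'k) set \<Rightarrow> bool" where
  "is_subcoalgebra c D \<longleftrightarrow> is_subspace D \<and> (\<forall>x\<in>D. comul c x \<in> tensor_sq D)"

definition simple_coalgebra :: "('i::finite \<Rightarrow> 'i \<Rightarrow> 'i \<Rightarrow> 'k::field) \<Rightarrow> ('i \<Rightarrow> 'k) \<Rightarrow> bool" where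
  "simple_coalgebra c eps \<longleftrightarrow> is_coalgebra c eps \<and> (UNIV :: ('i \<Rightarrow> 'k) set) \<noteq> {\<lambda>_. 0} \<and>
     (\<forall>D. is_subcoalgebra c D \<longrightarrow> D = {\<lambda>_. 0} \<or> D = UNIV)"

definition lin :: "('i::finite \<Rightarrow> 'i \<Rightarrow> 'k::field) \<Rightarrow> ('i \<Rightarrow> 'k) \<Rightarrow> ('i \<Rightarrow> 'k)" where
  "lin t x = (\<lambda>j. \<Sum>i\<in>UNIV. t j i * x i)"

definition lin_tensor :: "('i::finite \<Rightarrow> 'i \<Rightarrow> 'k::field) \<Rightarrow> ('i \<Rightarrow> 'i \<Rightarrow> 'k) \<Rightarrow> ('i \<Rightarrow> 'i \<Rightarrow> 'k)" where
  "lin_tensor t M = (\<lambda>a b. \<Sum>j\<in>UNIV. \<Sum>l\<in>UNIV. t a j * t b l * M j l)"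

definition trace :: "('i::finite \<Rightarrow> 'i \<Rightarrow> 'k::field) \<Rightarrow> 'k" where
  "trace t = (\<Sum>i\<in>UNIV. t i i)"

definition coalgebra_map :: "('i::finite \<Rightarrow> 'i \<Rightarrow> 'i \<Rightarrow> 'k::field) \<Rightarrow> ('i \<Rightarrow> 'k) \<Rightarrow> ('i \<Rightarrow> 'i \<Rightarrow> 'k) \<Rightarrow> bool" where
  "coalgebra_map c eps t \<longleftrightarrow>
     (\<forall>x. comul c (lin t x) = lin_tensor t (comul c x)) \<and> (\<forall>x. counit eps (lin t x) = counit eps x)"

definition coalgebra_aut :: "('i::finite \<Rightarrow> 'i \<Rightarrow> 'i \<Rightarrow> 'k::field) \<Rightarrow> ('i \<Rightarrow> 'k) \<Rightarrow> ('i \<Rightarrow> 'i \<Rightarrow> 'k) \<Rightarrow> bool" where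
  "coalgebra_aut c eps t \<longleftrightarrow> coalgebra_map c eps t \<and> bij (lin t)"

definition finite_order :: "('a \<Rightarrow> 'a) \<Rightarrow> bool" where
  "finite_order f \<longleftrightarrow> (\<exists>n>0. f ^^ n = id)"

definition ord :: "('a \<Rightarrow> 'a) \<Rightarrow> nat" where
  "ord f = (LEAST n. n > 0 \<and> f ^^ n = id)"

end

theory Submission
  imports Defs "HOL-Analysis.Cartesian_Space"
begin

text \<open>Dualising, \<open>C\<^sup>*\<close> is a simple algebra of dimension 4 over an algebraically closed
  field, i.e. \<open>M\<^sub>2(\<Bbbk>)\<close>, and the transpose \<open>S\<close> of \<open>T\<close> is an algebra automorphism with the
  same trace. By Skolem--Noether \<open>S X = P X P\<^sup>-\<^sup>1\<close>, and then
  \<open>tr S = tr P \<cdot> tr P\<^sup>-\<^sup>1\<close>. So \<open>P\<close> or \<open>P\<^sup>-\<^sup>1\<close> is traceless, hence squares to a scalar by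
  Cayley--Hamilton, and \<open>S\<^sup>2 = id\<close>. Finally \<open>T \<noteq> id\<close> because \<open>tr id = 4 \<noteq> 0\<close> in
  characteristic zero.\<close>

lemma family_linearly_dependent:
  fixes w :: "nat \<Rightarrow> 'k::field^'i::finite"
  assumes "CARD('i) < m"
  shows "\<exists>c. (\<exists>k<m. c k \<noteq> 0) \<and> (\<Sum>k<m. c k *s w k) = 0"
proof (cases "inj_on w {..<m}")
  case False
  then obtain i j where ij: "i < m" "j < m" "i \<noteq> j" "w i = w j"
    unfolding inj_on_def by auto
  define c where "c k = (if k = i then (1::'k) else if k = j then -1 else 0)" for k
  have "(\<Sum>k<m. c k *s w k) = (\<Sum>k<m. (if k = i then w k else 0) + (if k = j then - w k else 0))"
    by (rule sum.cong) (auto simp: c_def ij)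
  also have "\<dots> = w i - w j" using ij by (simp add: sum.distrib)
  finally show ?thesis using ij by (intro exI[of _ c]) (auto simp: c_def)
next
  case True
  define W where "W = w ` {..<m}"
  have "vec.dependent W"
  proof (rule ccontr)
    assume "\<not> vec.dependent W"
    then have "card W \<le> vec.dim (UNIV :: ('k^'i) set)"
      by (intro vec.independent_card_le_dim) auto
    then show False using True assms by (simp add: W_def card_image card_cart_basis)
  qed
  then obtain T u where T: "finite T" "T \<subseteq> W" "(\<Sum>v\<in>T. u v *s v) = 0" "\<exists>v\<in>T. u v \<noteq> 0"
    unfolding vec.dependent_explicit by blast
  define c where "c k = (if w k \<in> T then u (w k) else 0)" for k
  have "(\<Sum>k<m. c k *s w k) = (\<Sum>k\<in>{k\<in>{..<m}. w k \<in> T}. u (w k) *s w k)"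
  proof -
    have "(\<Sum>k<m. c k *s w k) = (\<Sum>k<m. if w k \<in> T then u (w k) *s w k else 0)"
      by (rule sum.cong) (auto simp: c_def)
    then show ?thesis by (simp add: sum.inter_filter[symmetric] lessThan_def)
  qed
  also have "\<dots> = (\<Sum>v\<in>w ` {k\<in>{..<m}. w k \<in> T}. u v *s v)"
    by (rule sum.reindex[symmetric, unfolded comp_def]) (use True in \<open>auto simp: inj_on_def\<close>)
  also have "w ` {k\<in>{..<m}. w k \<in> T} = T" using T(2) by (auto simp: W_def)
  finally have "(\<Sum>k<m. c k *s w k) = 0" using T(3) by simp
  moreover obtain v where "v \<in> T" "u v \<noteq> 0" using T(4) by blast
  then obtain k where "k < m" "w k = v" using T(2) by (auto simp: W_def)
  ultimately show ?thesis using \<open>u v \<noteq> 0\<close> \<open>v \<in> T\<close> by (intro exI[of _ c]) (auto simp: c_def)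
qed

section \<open>Finite-dimensional simple algebras\<close>

locale simple_algebra =
  fixes mult :: "'k::field^'i::finite \<Rightarrow> 'k^'i \<Rightarrow> 'k^'i" (infixl "\<odot>" 70)
    and one :: "'k^'i"
  assumes assoc: "(x \<odot> y) \<odot> z = x \<odot> (y \<odot> z)"
    and add_left: "(x + y) \<odot> z = x \<odot> z + y \<odot> z"
    and add_right: "x \<odot> (y + z) = x \<odot> y + x \<odot> z"
    and scale_left: "(a *s x) \<odot> y = a *s (x \<odot> y)"
    and scale_right: "x \<odot> (a *s y) = a *s (x \<odot> y)"
    and one_left: "one \<odot> x = x"
    and one_right: "x \<odot> one = x"
    and ideal_generated_contains_one: "x \<noteq> 0 \<Longrightarrow> one \<in> vec.span {a \<odot> x \<odot> b | a b. True}"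
    and alg_closed: "alg_closed TYPE('k)"
begin

lemma linear_mult_left: "Vector_Spaces.linear (*s) (*s) (\<lambda>x. a \<odot> x)"
  unfolding Vector_Spaces.linear_iff by (simp add: add_right scale_right vec.vector_space_axioms)

lemma linear_mult_right: "Vector_Spaces.linear (*s) (*s) (\<lambda>x. x \<odot> a)"
  unfolding Vector_Spaces.linear_iff by (simp add: add_left scale_left vec.vector_space_axioms)

lemma zero_left [simp]: "0 \<odot> x = 0"
  using vec.linear_0[OF linear_mult_right] by simp

lemma zero_right [simp]: "x \<odot> 0 = 0"
  using vec.linear_0[OF linear_mult_left] by simp

lemma diff_left: "(x - y) \<odot> z = x \<odot> z - y \<odot> z"
  using vec.linear_diff[OF linear_mult_right] by simp

lemma diff_right: "z \<odot> (x - y) = z \<odot> x - z \<odot> y"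
  using vec.linear_diff[OF linear_mult_left] by simp

lemma sum_left: "(\<Sum>k\<in>K. f k) \<odot> z = (\<Sum>k\<in>K. f k \<odot> z)"
  using vec.linear_sum[OF linear_mult_right] by simp

lemma sum_right: "z \<odot> (\<Sum>k\<in>K. f k) = (\<Sum>k\<in>K. z \<odot> f k)"
  using vec.linear_sum[OF linear_mult_left] by simp

lemmas mult_simps = add_left add_right scale_left scale_right diff_left diff_right one_left one_right

lemma one_neq_zero: "one \<noteq> 0"
proof
  assume "one = 0"
  then have "x = 0" for x :: "'k^'i" using one_left[of x] by simp
  then show False by (metis axis_nth zero_index zero_neq_one)
qed

lemma mult_eq_0_if_annihilates_ideal:
  assumes "x \<noteq> 0" and "\<And>a b. p \<odot> (a \<odot> x \<odot> b) \<odot> q = 0"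
  shows "p \<odot> q = 0"
proof -
  have "one \<in> vec.span {a \<odot> x \<odot> b | a b. True}" using ideal_generated_contains_one[OF assms(1)] .
  then have "p \<odot> one \<odot> q = 0"
  proof (induct rule: vec.span_induct_alt)
    case (step c g y)
    then obtain a b where "g = a \<odot> x \<odot> b" by auto
    then show ?case using step assms(2) by (simp add: mult_simps)
  qed simp
  then show ?thesis by (simp add: one_right)
qed

lemma hom_injective:
  assumes lin: "Vector_Spaces.linear (*s) (*s) S"
    and hom: "\<And>x y. S (x \<odot> y) = S x \<odot> S y" and unit: "S one = one"
    and "S x = 0"
  shows "x = 0"
proof (rule ccontr)
  assume "x \<noteq> 0"
  then have "one \<in> vec.span {a \<odot> x \<odot> b | a b. True}" by (rule ideal_generated_contains_one)
  then have "S one = 0"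
  proof (induct rule: vec.span_induct_alt)
    case base then show ?case using vec.linear_0[OF lin] by simp
  next
    case (step c g y)
    then obtain a b where "g = a \<odot> x \<odot> b" by auto
    then show ?case
      using step \<open>S x = 0\<close> hom vec.linear_add[OF lin] vec.linear_scale[OF lin] by simp
  qed
  then show False using unit one_neq_zero by simp
qed

lemma right_inverse_if_left_inverse:
  assumes "q \<odot> p = one"
  shows "p \<odot> q = one"
proof -
  have "inj (\<lambda>x. p \<odot> x)"
  proof (rule injI)
    fix x y assume "p \<odot> x = p \<odot> y"
    then have "q \<odot> p \<odot> x = q \<odot> p \<odot> y" by (simp add: assoc)
    then show "x = y" by (simp add: assms one_left)
  qed
  then obtain y where y: "p \<odot> y = one"
    using vec.linear_inj_imp_surj[OF linear_mult_left] by (metis surjD)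
  have "q = q \<odot> p \<odot> y" using y by (simp add: assoc one_right)
  then show ?thesis using y by (simp add: assms one_left)
qed

primrec corner_power :: "'k^'i \<Rightarrow> 'k^'i \<Rightarrow> nat \<Rightarrow> 'k^'i" where
  "corner_power f y 0 = f"
| "corner_power f y (Suc k) = y \<odot> corner_power f y k"

definition corner_poly :: "'k^'i \<Rightarrow> 'k^'i \<Rightarrow> 'k poly \<Rightarrow> 'k^'i" where
  "corner_poly f y p = (\<Sum>k\<le>degree p. coeff p k *s corner_power f y k)"

lemma corner_poly_bound:
  "degree p \<le> N \<Longrightarrow> corner_poly f y p = (\<Sum>k\<le>N. coeff p k *s corner_power f y k)"
  unfolding corner_poly_def by (rule sum.mono_neutral_left) (auto simp: coeff_eq_0)

lemma corner_poly_add: "corner_poly f y (p + q) = corner_poly f y p + corner_poly f y q"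
proof -
  let ?N = "max (degree p) (degree q)"
  have "degree (p + q) \<le> ?N" by (rule degree_add_le) auto
  then show ?thesis
    by (simp add: corner_poly_bound[of _ ?N] corner_poly_bound[of p ?N]
        corner_poly_bound[of q ?N] vector_sadd_rdistrib sum.distrib)
qed

lemma corner_poly_smult: "corner_poly f y (smult a p) = a *s corner_poly f y p"
  by (simp add: corner_poly_bound[of "smult a p" "degree p"] corner_poly_bound[of p "degree p"]
      vec.scale_sum_right)

lemma corner_poly_pCons_0: "corner_poly f y (pCons 0 p) = y \<odot> corner_poly f y p"
proof -
  have "corner_poly f y (pCons 0 p)
      = (\<Sum>k\<le>Suc (degree p). coeff (pCons 0 p) k *s corner_power f y k)"
    by (rule corner_poly_bound) (simp add: degree_pCons_le)
  also have "\<dots> = (\<Sum>k\<le>degree p. coeff p k *s corner_power f y (Suc k))"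
    by (subst sum.atMost_Suc_shift) simp
  also have "\<dots> = y \<odot> corner_poly f y p"
    by (simp add: corner_poly_def sum_right scale_right)
  finally show ?thesis .
qed

lemma corner_poly_commutes:
  assumes "f \<odot> f = f" and "y \<odot> f = y" and "f \<odot> y = y"
  shows "f \<odot> corner_poly f y p = corner_poly f y p \<and> corner_poly f y p \<odot> f = corner_poly f y p
    \<and> corner_poly f y p \<odot> y = y \<odot> corner_poly f y p"
proof -
  have "f \<odot> corner_power f y k = corner_power f y k \<and> corner_power f y k \<odot> f = corner_power f y k
      \<and> corner_power f y k \<odot> y = y \<odot> corner_power f y k" for k
    by (induct k) (use assms in \<open>simp_all add: assoc, simp_all add: assoc[symmetric]\<close>)
  then show ?thesis by (simp add: corner_poly_def sum_right sum_left scale_right scale_left)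
qed

text \<open>The eigenvector is \<open>q(y) \<odot> f\<close>, where \<open>p = (X - \<mu>) q\<close> is a polynomial of least degree
  with \<open>p(y) \<odot> f = 0\<close>.\<close>

lemma corner_eigenvector:
  assumes ff: "f \<odot> f = f" and yf: "y \<odot> f = y" and fy: "f \<odot> y = y" and "f \<noteq> 0"
  shows "\<exists>\<mu> v. v \<noteq> 0 \<and> f \<odot> v = v \<and> v \<odot> f = v \<and> y \<odot> v = \<mu> *s v \<and> v \<odot> y = \<mu> *s v"
proof -
  let ?N = "CARD('i)"
  obtain c where c: "\<exists>k<Suc ?N. c k \<noteq> 0" "(\<Sum>k<Suc ?N. c k *s corner_power f y k) = 0"
    using family_linearly_dependent[of "Suc ?N" "corner_power f y"] by auto
  define p0 where "p0 = Poly (map c [0..<Suc ?N])"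
  have coeff_p0: "coeff p0 k = (if k < Suc ?N then c k else 0)" for k
    by (simp add: p0_def nth_default_def del: upt_Suc)
  have "degree p0 \<le> ?N" by (rule degree_le) (simp add: coeff_p0)
  then have "corner_poly f y p0 = 0"
    using c(2) by (simp add: corner_poly_bound coeff_p0 lessThan_Suc_atMost[symmetric] del: lessThan_Suc)
  moreover have "p0 \<noteq> 0" using c(1) coeff_p0 by (metis coeff_0)
  ultimately obtain p where p: "p \<noteq> 0" "corner_poly f y p = 0"
    and p_min: "\<And>q. q \<noteq> 0 \<and> corner_poly f y q = 0 \<Longrightarrow> degree p \<le> degree q"
    using ex_has_least_nat[of "\<lambda>q. q \<noteq> 0 \<and> corner_poly f y q = 0" p0 degree] by blast
  have "degree p \<noteq> 0"
  proof
    assume "degree p = 0"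
    then have "corner_poly f y p = coeff p 0 *s f" and "coeff p 0 \<noteq> 0"
      using p(1) leading_coeff_0_iff[of p] by (auto simp: corner_poly_def)
    then show False using p(2) \<open>f \<noteq> 0\<close> by simp
  qed
  then obtain \<mu> where "poly p \<mu> = 0"
    using alg_closed unfolding alg_closed_def by (metis less_one not_le)
  then obtain q where pq: "p = [:-\<mu>, 1:] * q" by (auto simp: poly_eq_0_iff_dvd)
  have "q \<noteq> 0" using p(1) pq by auto
  then have "degree p = degree q + 1"
    unfolding pq by (subst degree_mult_eq) auto
  then have "corner_poly f y q \<noteq> 0" using p_min[of q] \<open>q \<noteq> 0\<close> by auto
  moreover have "p = smult (-\<mu>) q + pCons 0 q" using pq by simp
  then have "corner_poly f y p = (-\<mu>) *s corner_poly f y q + y \<odot> corner_poly f y q"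
    by (simp only: corner_poly_add corner_poly_smult corner_poly_pCons_0)
  then have "y \<odot> corner_poly f y q = \<mu> *s corner_poly f y q"
    using p(2) by (simp add: algebra_simps)
  ultimately show ?thesis using corner_poly_commutes[OF ff yf fy, of q] by metis
qed

subsection \<open>Matrix units\<close>

definition left_ideal :: "('k^'i) set \<Rightarrow> bool" where
  "left_ideal L \<longleftrightarrow> vec.subspace L \<and> (\<forall>a x. x \<in> L \<longrightarrow> a \<odot> x \<in> L)"

lemma left_ideal_range_mult_right: "left_ideal (range (\<lambda>a. a \<odot> z))"
  unfolding left_ideal_def
  by (auto simp: vec.linear_subspace_image[OF linear_mult_right vec.subspace_UNIV] assoc[symmetric])

lemma exists_nonscalar:
  assumes "2 \<le> CARD('i)"
  shows "\<exists>a. \<forall>\<mu>. a \<noteq> \<mu> *s one"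
proof (rule ccontr)
  assume "\<not> ?thesis"
  then have "UNIV \<subseteq> vec.span {one}" by (auto simp: vec.span_singleton)
  then have "vec.dim (UNIV :: ('k^'i) set) \<le> 1"
    by (metis vec.dim_span vec.dim_subset vec.dim_le_card' finite.intros is_singletonI
        is_singleton_altdef order_trans)
  then show False using assms by (simp add: card_cart_basis)
qed

lemma exists_proper_left_ideal:
  assumes "2 \<le> CARD('i)"
  shows "\<exists>N. left_ideal N \<and> N \<noteq> {0} \<and> one \<notin> N"
proof -
  obtain a where a: "\<And>\<mu>. a \<noteq> \<mu> *s one" using exists_nonscalar[OF assms] by blast
  obtain \<mu> v where v: "v \<noteq> 0" "a \<odot> v = \<mu> *s v" "v \<odot> a = \<mu> *s v"
    using corner_eigenvector[of one a] by (auto simp: one_left one_right one_neq_zero)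
  let ?N = "range (\<lambda>x. x \<odot> v)"
  have "v \<in> ?N" by (metis one_left rangeI)
  moreover have "one \<notin> ?N"
  proof
    assume "one \<in> ?N"
    then obtain x where x: "one = x \<odot> v" by auto
    have "v \<odot> (a - \<mu> *s one) = 0" using v by (simp add: mult_simps)
    then have "a - \<mu> *s one = 0" by (metis assoc one_left x zero_right)
    then show False using a by simp
  qed
  ultimately show ?thesis using left_ideal_range_mult_right v(1) by blast
qed

lemma exists_minimal_left_ideal:
  assumes "2 \<le> CARD('i)"
  shows "\<exists>L. left_ideal L \<and> L \<noteq> {0} \<and> one \<notin> L \<and>
    (\<forall>K. left_ideal K \<and> K \<subseteq> L \<and> K \<noteq> {0} \<longrightarrow> K = L)"
proof -
  obtain N where N: "left_ideal N" "N \<noteq> {0}" "one \<notin> N"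
    using exists_proper_left_ideal[OF assms] by blast
  obtain L where L: "left_ideal L" "L \<noteq> {0}"
    and L_min: "\<And>K. left_ideal K \<and> K \<noteq> {0} \<Longrightarrow> vec.dim L \<le> vec.dim K"
    using ex_has_least_nat[of "\<lambda>K. left_ideal K \<and> K \<noteq> {0}" N vec.dim] N by blast
  have "one \<notin> L"
  proof
    assume "one \<in> L"
    then have "L = UNIV" using L(1) one_right unfolding left_ideal_def by (metis UNIV_eq_I)
    then have "vec.dim (UNIV::('k^'i) set) \<le> vec.dim N" using L_min N by auto
    then have "N = UNIV"
      using vec.subspace_dim_equal[of N UNIV] N(1) by (auto simp: left_ideal_def)
    then show False using N(3) by simp
  qed
  moreover have "K = L" if "left_ideal K" "K \<subseteq> L" "K \<noteq> {0}" for K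
    using vec.subspace_dim_equal[of K L] that L_min[of K] L(1) by (auto simp: left_ideal_def)
  ultimately show ?thesis using L by blast
qed

text \<open>A minimal left ideal \<open>L\<close> is \<open>A \<odot> e\<close> for an idempotent \<open>e\<close>: since \<open>L \<odot> L \<noteq> 0\<close> some
  \<open>x \<in> L\<close> has \<open>L \<odot> x = L\<close>, and then \<open>e \<in> L\<close> with \<open>e \<odot> x = x\<close> is idempotent because
  \<open>{l \<in> L. l \<odot> x = 0}\<close> is a proper left subideal, hence zero.\<close>

lemma exists_primitive_idempotent:
  assumes "2 \<le> CARD('i)"
  shows "\<exists>e. e \<odot> e = e \<and> e \<noteq> 0 \<and> e \<noteq> one \<and> (\<forall>z. z \<noteq> 0 \<and> z \<odot> e = z \<longrightarrow> (\<exists>w. w \<odot> z = e))"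
proof -
  obtain L where L: "left_ideal L" "L \<noteq> {0}" "one \<notin> L"
    and L_min: "\<And>K. left_ideal K \<Longrightarrow> K \<subseteq> L \<Longrightarrow> K \<noteq> {0} \<Longrightarrow> K = L"
    using exists_minimal_left_ideal[OF assms] by blast
  have L_sub: "vec.subspace L" and L_mult: "\<And>a x. x \<in> L \<Longrightarrow> a \<odot> x \<in> L"
    using L(1) by (auto simp: left_ideal_def)
  obtain x l where x: "x \<in> L" "l \<in> L" "l \<odot> x \<noteq> 0"
  proof (rule ccontr)
    assume "\<not> thesis"
    then have L_sq: "\<And>x l. x \<in> L \<Longrightarrow> l \<in> L \<Longrightarrow> l \<odot> x = 0" using that by blast
    obtain x where "x \<in> L" "x \<noteq> 0" using L(2) vec.subspace_0[OF L_sub] by blast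
    have "one \<odot> x = 0"
    proof (rule mult_eq_0_if_annihilates_ideal[OF \<open>x \<noteq> 0\<close>])
      fix a b
      show "one \<odot> (a \<odot> x \<odot> b) \<odot> x = 0"
        using L_sq[OF L_mult[OF \<open>x \<in> L\<close>, of b] \<open>x \<in> L\<close>] by (simp add: assoc one_left)
    qed
    then show False using \<open>x \<noteq> 0\<close> by (simp add: one_left)
  qed
  have "(\<lambda>l. l \<odot> x) ` L = L"
  proof (rule L_min)
    show "left_ideal ((\<lambda>l. l \<odot> x) ` L)"
      unfolding left_ideal_def
      by (auto simp: vec.linear_subspace_image[OF linear_mult_right L_sub] assoc[symmetric]
          intro!: imageI L_mult)
  qed (use L_mult x in auto)
  then obtain e where e: "e \<in> L" "e \<odot> x = x" using x(1) by (metis imageE)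
  let ?K = "{l \<in> L. l \<odot> x = 0}"
  have "left_ideal ?K"
    using L_sub unfolding left_ideal_def vec.subspace_def by (auto simp: mult_simps L_mult assoc)
  moreover have "?K \<noteq> L" using e x by auto
  ultimately have "?K = {0}" using L_min by blast
  moreover have "e \<odot> e - e \<in> ?K"
    using e L_mult vec.subspace_diff[OF L_sub] by (simp add: diff_left assoc)
  ultimately have "e \<odot> e = e" by auto
  moreover have "\<exists>w. w \<odot> z = e" if "z \<noteq> 0" "z \<odot> e = z" for z
  proof -
    have "range (\<lambda>a. a \<odot> z) = L"
    proof (rule L_min)
      show "range (\<lambda>a. a \<odot> z) \<subseteq> L" using that L_mult[OF e(1)] L_mult by (metis image_subsetI)
      show "range (\<lambda>a. a \<odot> z) \<noteq> {0}" using that by (metis one_left rangeI singletonD)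
    qed (rule left_ideal_range_mult_right)
    then show ?thesis using e(1) by auto
  qed
  ultimately show ?thesis using e x L(3) by auto
qed

lemma primitive_idempotent_corner_scalar:
  assumes ee: "e \<odot> e = e" and "e \<noteq> 0"
    and left_inv: "\<And>z. z \<noteq> 0 \<Longrightarrow> z \<odot> e = z \<Longrightarrow> \<exists>w. w \<odot> z = e"
  shows "\<exists>\<mu>. e \<odot> y \<odot> e = \<mu> *s e"
proof -
  let ?y = "e \<odot> y \<odot> e"
  have y: "?y \<odot> e = ?y" "e \<odot> ?y = ?y" using ee by (simp_all add: assoc, simp_all add: assoc[symmetric])
  obtain \<mu> v where v: "v \<noteq> 0" "e \<odot> v = v" "?y \<odot> v = \<mu> *s v"
    using corner_eigenvector[OF ee y \<open>e \<noteq> 0\<close>] by blast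
  show ?thesis
  proof (cases "?y - \<mu> *s e = 0")
    case False
    have "(?y - \<mu> *s e) \<odot> e = ?y - \<mu> *s e" using y ee by (simp add: mult_simps)
    then obtain w where w: "w \<odot> (?y - \<mu> *s e) = e" using left_inv False by blast
    have "(?y - \<mu> *s e) \<odot> v = 0" using v by (simp add: mult_simps)
    then have "e \<odot> v = 0" using w by (metis assoc zero_right)
    then show ?thesis using v by simp
  qed auto
qed

lemma exists_off_diagonal_units:
  assumes ee: "e \<odot> e = e" and "e \<noteq> 0" and "e \<noteq> one"
    and corner: "\<And>y. \<exists>\<mu>. e \<odot> y \<odot> e = \<mu> *s e"
  shows "\<exists>u v. e \<odot> u = u \<and> u \<odot> e = 0 \<and> e \<odot> v = 0 \<and> v \<odot> e = v \<and> u \<odot> v = e"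
proof -
  define f where "f = one - e"
  have ff: "f \<odot> f = f" and ef: "e \<odot> f = 0" and fe: "f \<odot> e = 0" and "f \<noteq> 0"
    using ee \<open>e \<noteq> one\<close> by (simp_all add: f_def mult_simps)
  obtain b where b: "e \<odot> b \<odot> f \<noteq> 0"
  proof (rule ccontr)
    assume "\<not> thesis"
    then have "\<And>a b. f \<odot> (a \<odot> e \<odot> b) \<odot> f = 0" using that by (metis assoc zero_right)
    then have "f \<odot> f = 0" by (rule mult_eq_0_if_annihilates_ideal[OF \<open>e \<noteq> 0\<close>])
    then show False using ff \<open>f \<noteq> 0\<close> by simp
  qed
  define u where "u = e \<odot> b \<odot> f"
  have uf: "u \<odot> f = u" and eu: "e \<odot> u = u" and ue: "u \<odot> e = 0"
    using ff ee fe by (simp_all add: u_def assoc, simp add: assoc[symmetric])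
  obtain b' where b': "u \<odot> b' \<odot> e \<noteq> 0"
  proof (rule ccontr)
    assume "\<not> thesis"
    then have "\<And>a b. e \<odot> (a \<odot> u \<odot> b) \<odot> e = 0" using that by (metis assoc zero_right)
    moreover have "u \<noteq> 0" using b by (simp add: u_def)
    ultimately have "e \<odot> e = 0" using mult_eq_0_if_annihilates_ideal by blast
    then show False using ee \<open>e \<noteq> 0\<close> by simp
  qed
  define v' where "v' = f \<odot> b' \<odot> e"
  have "u \<odot> v' = u \<odot> b' \<odot> e" using uf by (simp add: v'_def assoc[symmetric])
  moreover have "u \<odot> v' = e \<odot> (b \<odot> f \<odot> b') \<odot> e"
    unfolding u_def v'_def using ff by (metis assoc)
  then obtain \<alpha> where "u \<odot> v' = \<alpha> *s e" using corner by metis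
  ultimately have uv': "u \<odot> v' = \<alpha> *s e" and "\<alpha> \<noteq> 0" using b' by auto
  define v where "v = (1/\<alpha>) *s v'"
  have "u \<odot> v = e" using uv' \<open>\<alpha> \<noteq> 0\<close> by (simp add: v_def scale_right)
  moreover have "v \<odot> e = v" and "e \<odot> v = 0"
    using ee ef by (simp_all add: v_def v'_def scale_left scale_right assoc, simp add: assoc[symmetric])
  ultimately show ?thesis using eu ue by blast
qed

end

locale matrix_units = simple_algebra mult one
  for mult :: "'k::field^'i::finite \<Rightarrow> 'k^'i \<Rightarrow> 'k^'i" (infixl "\<odot>" 70) and one +
  fixes e u v :: "'k^'i"
  assumes dim_4: "CARD('i) = 4"
    and ee: "e \<odot> e = e" and eu: "e \<odot> u = u" and ue: "u \<odot> e = 0" and ev: "e \<odot> v = 0"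
    and ve: "v \<odot> e = v" and uv: "u \<odot> v = e" and e_neq_0: "e \<noteq> 0"
    and corner_scalar: "\<exists>\<mu>. e \<odot> y \<odot> e = \<mu> *s e"

lemma (in simple_algebra) exists_matrix_units:
  assumes "CARD('i) = 4"
  shows "\<exists>e u v. matrix_units (\<odot>) one e u v"
proof -
  obtain e where e: "e \<odot> e = e" "e \<noteq> 0" "e \<noteq> one"
    and left_inv: "\<And>z. z \<noteq> 0 \<Longrightarrow> z \<odot> e = z \<Longrightarrow> \<exists>w. w \<odot> z = e"
    using exists_primitive_idempotent assms by auto
  have corner: "\<exists>\<mu>. e \<odot> y \<odot> e = \<mu> *s e" for y
    using primitive_idempotent_corner_scalar[OF e(1,2) left_inv] by blast
  obtain u v where uv: "e \<odot> u = u" "u \<odot> e = 0" "e \<odot> v = 0" "v \<odot> e = v" "u \<odot> v = e"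
    using exists_off_diagonal_units[OF e corner] by blast
  have "matrix_units (\<odot>) one e u v"
    using assms e uv corner
    by (intro matrix_units.intro[OF simple_algebra_axioms] matrix_units_axioms.intro) auto
  then show ?thesis by blast
qed

context matrix_units
begin

lemma u_square: "u \<odot> u = 0"
  by (metis assoc eu ue zero_left)

lemma v_square: "v \<odot> v = 0"
  by (metis assoc ev ve zero_right)

lemmas units = ee eu ue ev ve uv u_square v_square

lemma units_assoc:
  "e \<odot> (e \<odot> z) = e \<odot> z" "e \<odot> (u \<odot> z) = u \<odot> z" "u \<odot> (e \<odot> z) = 0" "e \<odot> (v \<odot> z) = 0"
  "v \<odot> (e \<odot> z) = v \<odot> z" "u \<odot> (v \<odot> z) = e \<odot> z" "u \<odot> (u \<odot> z) = 0" "v \<odot> (v \<odot> z) = 0"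
  by (simp_all add: assoc[symmetric] units)

text \<open>With \<open>g = one - e - v \<odot> u\<close>, the five elements \<open>e, u, v, v \<odot> u, g\<close> are dependent;
  multiplying a relation from both sides by \<open>e, u, v\<close> isolates the first four coefficients.\<close>

lemma one_eq: "one = e + v \<odot> u"
proof -
  define g where "g = one - e - v \<odot> u"
  have "g = 0"
  proof (rule ccontr)
    assume "g \<noteq> 0"
    define w where "w k = [e, u, v, v \<odot> u, g] ! k" for k
    obtain c where c: "\<exists>k<5. c k \<noteq> 0" "(\<Sum>k<5. c k *s w k) = 0"
      using family_linearly_dependent[of 5 w] dim_4 by auto
    then have rel: "c 0 *s e + c 1 *s u + c 2 *s v + c 3 *s (v \<odot> u) + c 4 *s g = 0"
      by (simp add: numeral_eq_Suc w_def algebra_simps)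
    have sandwich: "x \<odot> (c 0 *s e + c 1 *s u + c 2 *s v + c 3 *s (v \<odot> u) + c 4 *s g) \<odot> y = 0"
      for x y
      using rel by simp
    have "c 0 *s e = 0" "c 1 *s e = 0" "c 2 *s e = 0" "c 3 *s e = 0"
      using sandwich[of e e] sandwich[of e v] sandwich[of u e] sandwich[of u v]
      by (simp_all add: g_def mult_simps assoc units units_assoc)
    then have "c 0 = 0" "c 1 = 0" "c 2 = 0" "c 3 = 0" using e_neq_0 by auto
    moreover have "c 4 = 0" using rel calculation \<open>g \<noteq> 0\<close> by simp
    ultimately show False using c(1) by (auto simp: numeral_eq_Suc less_Suc_eq)
  qed
  then show ?thesis by (simp add: g_def algebra_simps)
qed

text \<open>\<open>e, u, v, v \<odot> u\<close> play the roles of the matrix units \<open>E11, E12, E21, E22\<close>.\<close>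

definition mat2 :: "'k \<Rightarrow> 'k \<Rightarrow> 'k \<Rightarrow> 'k \<Rightarrow> 'k^'i" where
  "mat2 a b c d = a *s e + b *s u + c *s v + d *s (v \<odot> u)"

lemma mat2_mult:
  "mat2 a b c d \<odot> mat2 a' b' c' d' =
     mat2 (a * a' + b * c') (a * b' + b * d') (c * a' + d * c') (c * b' + d * d')"
proof -
  have "v \<odot> u \<odot> e = 0" "v \<odot> u \<odot> u = 0" "v \<odot> u \<odot> v = v" "v \<odot> u \<odot> (v \<odot> u) = v \<odot> u"
    "e \<odot> (v \<odot> u) = 0" "u \<odot> (v \<odot> u) = u" "v \<odot> (v \<odot> u) = 0"
    by (simp_all add: assoc units units_assoc)
  then show ?thesis
    unfolding mat2_def
    by (simp only: add_left add_right scale_left scale_right units vec.scale_zero_right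
        add_0_left add_0_right)
      (simp add: vec_eq_iff algebra_simps)
qed

lemma mat2_one: "mat2 1 0 0 1 = one"
  by (simp add: mat2_def one_eq)

lemma mat2_units: "mat2 1 0 0 0 = e" "mat2 0 1 0 0 = u" "mat2 0 0 1 0 = v" "mat2 0 0 0 1 = v \<odot> u"
  by (simp_all add: mat2_def)

definition corner_coeff :: "'k^'i \<Rightarrow> 'k" where
  "corner_coeff y = (SOME \<mu>. e \<odot> y \<odot> e = \<mu> *s e)"

lemma corner_coeff: "e \<odot> y \<odot> e = corner_coeff y *s e"
  unfolding corner_coeff_def using corner_scalar[of y] by (rule someI_ex)

lemma corner_coeff_unique: "e \<odot> y \<odot> e = \<mu> *s e \<Longrightarrow> corner_coeff y = \<mu>"
  using corner_coeff[of y] e_neq_0 by (metis vec.scale_right_imp_eq)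

lemma corner_coeff_scale_sum: "corner_coeff (\<Sum>i\<in>A. c i *s y i) = (\<Sum>i\<in>A. c i * corner_coeff (y i))"
  by (rule corner_coeff_unique)
    (simp add: sum_left sum_right scale_left scale_right corner_coeff vec.scale_sum_left)

definition entry11 :: "'k^'i \<Rightarrow> 'k" where "entry11 X = corner_coeff X"
definition entry12 :: "'k^'i \<Rightarrow> 'k" where "entry12 X = corner_coeff (X \<odot> v)"
definition entry21 :: "'k^'i \<Rightarrow> 'k" where "entry21 X = corner_coeff (u \<odot> X)"
definition entry22 :: "'k^'i \<Rightarrow> 'k" where "entry22 X = corner_coeff (u \<odot> X \<odot> v)"

lemmas entry_defs = entry11_def entry12_def entry21_def entry22_def

lemma entries_mat2:
  "entry11 (mat2 a b c d) = a" "entry12 (mat2 a b c d) = b"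
  "entry21 (mat2 a b c d) = c" "entry22 (mat2 a b c d) = d"
proof -
  have corner: "corner_coeff (mat2 a' b' c' d') = a'" for a' b' c' d'
  proof (rule corner_coeff_unique)
    have "mat2 1 0 0 0 \<odot> mat2 a' b' c' d' \<odot> mat2 1 0 0 0 = mat2 a' 0 0 0"
      by (simp add: mat2_mult)
    then show "e \<odot> mat2 a' b' c' d' \<odot> e = a' *s e"
      by (simp add: mat2_units) (simp add: mat2_def)
  qed
  have "mat2 a' b' c' d' \<odot> v = mat2 b' 0 d' 0" for a' b' c' d'
    using mat2_mult[of a' b' c' d' 0 0 1 0] by (simp add: mat2_units)
  moreover have "u \<odot> mat2 a b c d = mat2 c d 0 0"
    using mat2_mult[of 0 1 0 0 a b c d] by (simp add: mat2_units)
  ultimately show "entry11 (mat2 a b c d) = a" "entry12 (mat2 a b c d) = b"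
    "entry21 (mat2 a b c d) = c" "entry22 (mat2 a b c d) = d"
    by (simp_all add: entry_defs corner)
qed

lemma mat2_entries: "X = mat2 (entry11 X) (entry12 X) (entry21 X) (entry22 X)"
proof -
  have "X = one \<odot> X \<odot> one" by (simp add: one_left one_right)
  also have "\<dots> = e \<odot> X \<odot> e + e \<odot> X \<odot> (v \<odot> u) + v \<odot> u \<odot> X \<odot> e + v \<odot> u \<odot> X \<odot> (v \<odot> u)"
    by (simp add: one_eq add_left add_right)
  also have "e \<odot> X \<odot> (v \<odot> u) = (e \<odot> (X \<odot> v) \<odot> e) \<odot> u"
    by (simp add: assoc units units_assoc)
  also have "v \<odot> u \<odot> X \<odot> e = v \<odot> (e \<odot> (u \<odot> X) \<odot> e)"
    by (simp add: assoc units units_assoc)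
  also have "v \<odot> u \<odot> X \<odot> (v \<odot> u) = v \<odot> (e \<odot> (u \<odot> X \<odot> v) \<odot> e) \<odot> u"
    by (simp add: assoc units units_assoc)
  finally show ?thesis
    by (simp add: corner_coeff scale_left scale_right units mat2_def entry_defs)
qed

lemma entries_scale_sum:
  "entry11 (\<Sum>i\<in>A. c i *s Y i) = (\<Sum>i\<in>A. c i * entry11 (Y i))"
  "entry12 (\<Sum>i\<in>A. c i *s Y i) = (\<Sum>i\<in>A. c i * entry12 (Y i))"
  "entry21 (\<Sum>i\<in>A. c i *s Y i) = (\<Sum>i\<in>A. c i * entry21 (Y i))"
  "entry22 (\<Sum>i\<in>A. c i *s Y i) = (\<Sum>i\<in>A. c i * entry22 (Y i))"
  by (simp_all add: entry_defs sum_left sum_right scale_left scale_right corner_coeff_scale_sum)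

end

subsection \<open>Skolem--Noether and traces\<close>

definition endo_trace :: "('k::field^'i::finite \<Rightarrow> 'k^'i) \<Rightarrow> 'k" where
  "endo_trace S = (\<Sum>i\<in>UNIV. S (axis i 1) $ i)"

context matrix_units
begin

text \<open>\<open>P\<close> carries the matrix units \<open>e, u, v\<close> to \<open>S e, S u, S v\<close>; the element \<open>b\<close>, found by
  simplicity, makes \<open>e \<odot> a \<odot> S e \<odot> b \<odot> e\<close> a nonzero multiple of \<open>e\<close>, which yields the
  inverse \<open>Q\<close>.\<close>

lemma skolem_noether:
  assumes lin: "Vector_Spaces.linear (*s) (*s) S"
    and hom: "\<And>x y. S (x \<odot> y) = S x \<odot> S y" and unit: "S one = one"
  shows "\<exists>P Q. Q \<odot> P = one \<and> P \<odot> Q = one \<and> (\<forall>X. S X = P \<odot> X \<odot> Q)"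
proof -
  define E U V where "E = S e" and "U = S u" and "V = S v"
  have S_units: "E \<odot> E = E" "E \<odot> U = U" "U \<odot> E = 0" "E \<odot> V = 0" "V \<odot> E = V"
    "U \<odot> V = E" "U \<odot> U = 0" "V \<odot> V = 0"
    unfolding E_def U_def V_def hom[symmetric] using vec.linear_0[OF lin] by (simp_all add: units)
  have S_units_assoc:
    "E \<odot> (E \<odot> z) = E \<odot> z" "E \<odot> (U \<odot> z) = U \<odot> z" "U \<odot> (E \<odot> z) = 0" "E \<odot> (V \<odot> z) = 0"
    "V \<odot> (E \<odot> z) = V \<odot> z" "U \<odot> (V \<odot> z) = E \<odot> z" "U \<odot> (U \<odot> z) = 0" "V \<odot> (V \<odot> z) = 0" for z
    by (simp_all add: assoc[symmetric] S_units)
  have "E \<noteq> 0" using hom_injective[OF lin hom unit, of e] e_neq_0 by (auto simp: E_def U_def V_def)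
  obtain a b where ab: "e \<odot> (a \<odot> E \<odot> b) \<odot> e \<noteq> 0"
  proof (rule ccontr)
    assume "\<not> thesis"
    then have "e \<odot> e = 0" using that mult_eq_0_if_annihilates_ideal[OF \<open>E \<noteq> 0\<close>] by blast
    then show False using ee e_neq_0 by simp
  qed
  define \<alpha> where "\<alpha> = corner_coeff (a \<odot> E \<odot> b)"
  have "\<alpha> \<noteq> 0" using ab corner_coeff[of "a \<odot> E \<odot> b"] by (auto simp: \<alpha>_def)
  have \<alpha>: "e \<odot> (a \<odot> (E \<odot> (b \<odot> e))) = \<alpha> *s e"
    using corner_coeff[of "a \<odot> E \<odot> b"] by (simp add: \<alpha>_def assoc)
  define P where "P = E \<odot> b \<odot> e + V \<odot> b \<odot> u"
  define Q where "Q = (1/\<alpha>) *s (e \<odot> a \<odot> E + v \<odot> a \<odot> U)"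
  have PX: "P \<odot> X = S X \<odot> P" for X
  proof -
    have S_mat2: "S (mat2 c1 c2 c3 c4) = c1 *s E + c2 *s U + c3 *s V + c4 *s (V \<odot> U)"
      for c1 c2 c3 c4
      by (simp add: mat2_def vec.linear_add[OF lin] vec.linear_scale[OF lin] hom E_def U_def V_def)
    have "P \<odot> mat2 c1 c2 c3 c4 = S (mat2 c1 c2 c3 c4) \<odot> P" for c1 c2 c3 c4
      unfolding S_mat2 unfolding P_def mat2_def
      by (simp add: mult_simps assoc units units_assoc S_units S_units_assoc)
    then show ?thesis by (metis mat2_entries)
  qed
  have QP: "Q \<odot> P = one"
  proof -
    have "v \<odot> (a \<odot> (E \<odot> (b \<odot> u))) = v \<odot> (e \<odot> (a \<odot> (E \<odot> (b \<odot> e)))) \<odot> u"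
      by (simp add: assoc units units_assoc)
    also have "\<dots> = \<alpha> *s (v \<odot> u)" by (simp add: \<alpha> scale_right scale_left units)
    finally have "e \<odot> (a \<odot> (E \<odot> (b \<odot> e))) + v \<odot> (a \<odot> (E \<odot> (b \<odot> u))) = \<alpha> *s one"
      using \<alpha> by (simp add: one_eq vec.scale_right_distrib)
    moreover have "Q \<odot> P = (1/\<alpha>) *s (e \<odot> (a \<odot> (E \<odot> (b \<odot> e))) + v \<odot> (a \<odot> (E \<odot> (b \<odot> u))))"
      unfolding P_def Q_def
      by (simp add: mult_simps assoc units units_assoc S_units S_units_assoc vec.scale_right_distrib)
    ultimately show ?thesis using \<open>\<alpha> \<noteq> 0\<close> by simp
  qed
  then have "P \<odot> Q = one" by (rule right_inverse_if_left_inverse)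
  then have "S X = P \<odot> X \<odot> Q" for X
    by (metis PX assoc one_right)
  then show ?thesis using QP \<open>P \<odot> Q = one\<close> by blast
qed

lemma endo_trace_entries:
  assumes lin: "Vector_Spaces.linear (*s) (*s) S"
  shows "endo_trace S = entry11 (S e) + entry12 (S u) + entry21 (S v) + entry22 (S (v \<odot> u))"
proof -
  have S: "S x = (\<Sum>i\<in>UNIV. x $ i *s S (axis i 1))" for x
    by (subst basis_expansion[symmetric, of x])
      (simp add: vec.linear_sum[OF lin] vec.linear_scale[OF lin])
  have "S (axis i 1) $ i = entry11 (S (axis i 1)) * e $ i + entry12 (S (axis i 1)) * u $ i
      + entry21 (S (axis i 1)) * v $ i + entry22 (S (axis i 1)) * (v \<odot> u) $ i" for i
    by (subst mat2_entries) (simp add: mat2_def)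
  then have "endo_trace S = (\<Sum>i\<in>UNIV. e $ i * entry11 (S (axis i 1)))
     + (\<Sum>i\<in>UNIV. u $ i * entry12 (S (axis i 1))) + (\<Sum>i\<in>UNIV. v $ i * entry21 (S (axis i 1)))
     + (\<Sum>i\<in>UNIV. (v \<odot> u) $ i * entry22 (S (axis i 1)))"
    by (simp add: endo_trace_def sum.distrib mult.commute)
  also have "\<dots> = entry11 (S e) + entry12 (S u) + entry21 (S v) + entry22 (S (v \<odot> u))"
    by (simp add: S[of e] S[of u] S[of v] S[of "v \<odot> u"] entries_scale_sum)
  finally show ?thesis .
qed

lemma endo_trace_conjugation:
  "endo_trace (\<lambda>X. P \<odot> X \<odot> Q) = (entry11 P + entry22 P) * (entry11 Q + entry22 Q)"
proof -
  have lin: "Vector_Spaces.linear (*s) (*s) (\<lambda>X. P \<odot> X \<odot> Q)"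
    using Vector_Spaces.linear_compose[OF linear_mult_left linear_mult_right] by (simp add: comp_def)
  obtain p0 p1 p2 p3 q0 q1 q2 q3 where P: "P = mat2 p0 p1 p2 p3" and Q: "Q = mat2 q0 q1 q2 q3"
    using mat2_entries by metis
  have "P \<odot> e \<odot> Q = mat2 p0 p1 p2 p3 \<odot> mat2 1 0 0 0 \<odot> mat2 q0 q1 q2 q3"
    "P \<odot> u \<odot> Q = mat2 p0 p1 p2 p3 \<odot> mat2 0 1 0 0 \<odot> mat2 q0 q1 q2 q3"
    "P \<odot> v \<odot> Q = mat2 p0 p1 p2 p3 \<odot> mat2 0 0 1 0 \<odot> mat2 q0 q1 q2 q3"
    "P \<odot> (v \<odot> u) \<odot> Q = mat2 p0 p1 p2 p3 \<odot> mat2 0 0 0 1 \<odot> mat2 q0 q1 q2 q3"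
    by (simp_all only: P Q mat2_units)
  then show ?thesis
    unfolding endo_trace_entries[OF lin] by (simp add: P Q mat2_mult entries_mat2 algebra_simps)
qed

lemma traceless_square_scalar: "mat2 a b c (-a) \<odot> mat2 a b c (-a) = (a * a + b * c) *s one"
proof -
  have "mat2 a b c (-a) \<odot> mat2 a b c (-a) = mat2 (a * a + b * c) 0 0 (a * a + b * c)"
    by (simp add: mat2_mult algebra_simps)
  then show ?thesis by (simp add: mat2_one[symmetric] mat2_def vec.scale_right_distrib)
qed

lemma trace_zero_automorphism_involutive:
  assumes lin: "Vector_Spaces.linear (*s) (*s) S"
    and hom: "\<And>x y. S (x \<odot> y) = S x \<odot> S y" and unit: "S one = one"
    and "endo_trace S = 0"
  shows "S (S X) = X"
proof -
  obtain P Q where PQ: "Q \<odot> P = one" "P \<odot> Q = one" and S: "S = (\<lambda>X. P \<odot> X \<odot> Q)"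
    using skolem_noether[OF lin hom unit] by blast
  have "entry11 P + entry22 P = 0 \<or> entry11 Q + entry22 Q = 0"
    using endo_trace_conjugation[of P Q] assms(4) unfolding S by simp
  then obtain s where "P \<odot> P = s *s one \<or> Q \<odot> Q = s *s one"
    by (metis mat2_entries traceless_square_scalar add_eq_0_iff)
  moreover have "s *s one \<odot> Y = Y \<odot> (s *s one)" for Y
    by (simp add: scale_left scale_right one_left one_right)
  ultimately show ?thesis
    unfolding S using PQ by (metis assoc one_left one_right)
qed

end

lemma (in simple_algebra) involutive_if_endo_trace_zero:
  assumes "CARD('i) = 4"
    and "Vector_Spaces.linear (*s) (*s) S"
    and "\<And>x y. S (x \<odot> y) = S x \<odot> S y" and "S one = one"
    and "endo_trace S = 0"
  shows "S (S X) = X"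
proof -
  obtain e u v where "matrix_units (\<odot>) one e u v"
    using exists_matrix_units[OF assms(1)] by blast
  then show ?thesis
    using matrix_units.trace_zero_automorphism_involutive assms(2-5) by blast
qed

section \<open>The dual algebra of a coalgebra\<close>

text \<open>A functional \<open>\<phi>\<close> on \<open>C\<close> is represented by the vector of its values \<open>\<phi>(e\<^sub>i)\<close>.
  The product of \<open>C\<^sup>*\<close> is the convolution \<open>(\<phi> \<psi>)(x) = (\<phi> \<otimes> \<psi>)(\<Delta> x)\<close>, its unit is \<open>\<epsilon>\<close>,
  and \<open>T\<close> acts on \<open>C\<^sup>*\<close> by its transpose \<open>\<phi> \<mapsto> \<phi> \<circ> T\<close>.\<close>

definition dual_mult :: "('i::finite \<Rightarrow> 'i \<Rightarrow> 'i \<Rightarrow> 'k::field) \<Rightarrow> 'k^'i \<Rightarrow> 'k^'i \<Rightarrow> 'k^'i" where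
  "dual_mult c x y = (\<chi> i. \<Sum>j\<in>UNIV. \<Sum>l\<in>UNIV. c i j l * x $ j * y $ l)"

definition dual_unit :: "('i::finite \<Rightarrow> 'k::field) \<Rightarrow> 'k^'i" where
  "dual_unit eps = (\<chi> i. eps i)"

definition dual_map :: "('i::finite \<Rightarrow> 'i \<Rightarrow> 'k::field) \<Rightarrow> 'k^'i \<Rightarrow> 'k^'i" where
  "dual_map t x = (\<chi> i. \<Sum>j\<in>UNIV. t j i * x $ j)"

lemma mult_if_zero [simp]:
  "a * (if P then b else 0) = (if P then a * b else (0::'a::semiring_0))"
  "(if P then a else 0) * b = (if P then a * b else (0::'a::semiring_0))"
  by simp_all

lemma sum_cycle3:
  fixes f :: "'a::finite \<Rightarrow> 'b::finite \<Rightarrow> 'c::finite \<Rightarrow> 'k::comm_monoid_add"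
  shows "(\<Sum>x\<in>UNIV. \<Sum>y\<in>UNIV. \<Sum>z\<in>UNIV. f x y z) = (\<Sum>y\<in>UNIV. \<Sum>z\<in>UNIV. \<Sum>x\<in>UNIV. f x y z)"
  by (subst sum.swap) (rule sum.cong[OF refl], rule sum.swap)

lemma sum_cycle4:
  fixes f :: "'a::finite \<Rightarrow> 'b::finite \<Rightarrow> 'c::finite \<Rightarrow> 'd::finite \<Rightarrow> 'k::comm_monoid_add"
  shows "(\<Sum>w\<in>UNIV. \<Sum>x\<in>UNIV. \<Sum>y\<in>UNIV. \<Sum>z\<in>UNIV. f w x y z)
    = (\<Sum>x\<in>UNIV. \<Sum>y\<in>UNIV. \<Sum>z\<in>UNIV. \<Sum>w\<in>UNIV. f w x y z)"
  by (subst sum.swap) (rule sum.cong[OF refl], rule sum_cycle3)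

lemma dual_mult_assoc:
  assumes "is_coalgebra c eps"
  shows "dual_mult c (dual_mult c x y) z = dual_mult c x (dual_mult c y z)"
proof -
  have coassoc: "(\<Sum>j\<in>UNIV. c i j d * c j a b) = (\<Sum>l\<in>UNIV. c i a l * c l b d)" for i a b d
    using assms by (simp add: is_coalgebra_def)
  have "dual_mult c (dual_mult c x y) z $ i = dual_mult c x (dual_mult c y z) $ i" for i
  proof -
    have "dual_mult c (dual_mult c x y) z $ i =
      (\<Sum>j\<in>UNIV. \<Sum>d\<in>UNIV. \<Sum>a\<in>UNIV. \<Sum>b\<in>UNIV. (c i j d * c j a b) * (x $ a * y $ b * z $ d))"
      by (simp add: dual_mult_def sum_distrib_left sum_distrib_right mult_ac)
    also have "\<dots> = (\<Sum>d\<in>UNIV. \<Sum>a\<in>UNIV. \<Sum>b\<in>UNIV. (\<Sum>j\<in>UNIV. c i j d * c j a b) * (x $ a * y $ b * z $ d))"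
      by (subst sum_cycle4) (simp only: sum_distrib_right)
    also have "\<dots> = (\<Sum>a\<in>UNIV. \<Sum>b\<in>UNIV. \<Sum>d\<in>UNIV. \<Sum>l\<in>UNIV. c i a l * c l b d * (x $ a * y $ b * z $ d))"
      by (subst sum_cycle3) (simp only: coassoc sum_distrib_right)
    also have "\<dots> = (\<Sum>a\<in>UNIV. \<Sum>l\<in>UNIV. \<Sum>b\<in>UNIV. \<Sum>d\<in>UNIV. c i a l * c l b d * (x $ a * y $ b * z $ d))"
      by (rule sum.cong[OF refl], rule sum_cycle3[symmetric])
    also have "\<dots> = dual_mult c x (dual_mult c y z) $ i"
      by (simp add: dual_mult_def sum_distrib_left sum_distrib_right mult_ac)
    finally show ?thesis .
  qed
  then show ?thesis by (simp add: vec_eq_iff)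
qed

lemma dual_mult_add_left: "dual_mult c (x + y) z = dual_mult c x z + dual_mult c y z"
  by (simp add: dual_mult_def vec_eq_iff algebra_simps sum.distrib)

lemma dual_mult_add_right: "dual_mult c x (y + z) = dual_mult c x y + dual_mult c x z"
  by (simp add: dual_mult_def vec_eq_iff algebra_simps sum.distrib)

lemma dual_mult_scale_left: "dual_mult c (a *s x) y = a *s dual_mult c x y"
  by (simp add: dual_mult_def vec_eq_iff sum_distrib_left mult_ac)

lemma dual_mult_scale_right: "dual_mult c x (a *s y) = a *s dual_mult c x y"
  by (simp add: dual_mult_def vec_eq_iff sum_distrib_left mult_ac)

lemma dual_mult_zero_left: "dual_mult c 0 x = 0"
  by (simp add: dual_mult_def vec_eq_iff)

lemma dual_mult_zero_right: "dual_mult c x 0 = 0"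
  by (simp add: dual_mult_def vec_eq_iff)

lemma dual_mult_axis_left: "dual_mult c (axis j 1) x $ i = (\<Sum>l\<in>UNIV. c i j l * x $ l)"
  unfolding dual_mult_def by (subst sum.swap) (simp add: axis_def)

lemma dual_mult_axis_right: "dual_mult c x (axis l 1) $ i = (\<Sum>j\<in>UNIV. c i j l * x $ j)"
  by (simp add: dual_mult_def axis_def)

lemma dual_unit_left:
  assumes "is_coalgebra c eps"
  shows "dual_mult c (dual_unit eps) x = x"
proof -
  have "(\<Sum>j\<in>UNIV. c i j l * eps j) = (if i = l then 1 else 0)" for i l
    using assms by (simp add: is_coalgebra_def)
  then have "dual_mult c (dual_unit eps) x $ i = x $ i" for i
    by (simp add: dual_mult_def dual_unit_def sum.swap[of _ UNIV] sum_distrib_right[symmetric])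
  then show ?thesis by (simp add: vec_eq_iff)
qed

lemma dual_unit_right:
  assumes "is_coalgebra c eps"
  shows "dual_mult c x (dual_unit eps) = x"
proof -
  have "(\<Sum>l\<in>UNIV. c i j l * eps l) = (if i = j then 1 else 0)" for i j
    using assms by (simp add: is_coalgebra_def)
  moreover have "dual_mult c x (dual_unit eps) $ i = (\<Sum>j\<in>UNIV. x $ j * (\<Sum>l\<in>UNIV. c i j l * eps l))"
    for i by (simp add: dual_mult_def dual_unit_def sum_distrib_left mult_ac)
  ultimately have "dual_mult c x (dual_unit eps) $ i = x $ i" for i by simp
  then show ?thesis by (simp add: vec_eq_iff)
qed

lemma linear_dual_map: "Vector_Spaces.linear (*s) (*s) (dual_map t)"
  unfolding Vector_Spaces.linear_iff
  by (simp add: dual_map_def vec.vector_space_axioms vec_eq_iff algebra_simps sum.distrib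
      sum_distrib_left)

lemma endo_trace_dual_map: "endo_trace (dual_map t) = trace t"
  by (simp add: endo_trace_def dual_map_def trace_def axis_def)

lemma dual_map_unit:
  assumes "coalgebra_map c eps t"
  shows "dual_map t (dual_unit eps) = dual_unit eps"
proof -
  have "counit eps (lin t (\<lambda>k. if k = i then 1 else 0)) = counit eps (\<lambda>k. if k = i then 1 else 0)"
    for i using assms by (simp add: coalgebra_map_def)
  then have "(\<Sum>j\<in>UNIV. t j i * eps j) = eps i" for i by (simp add: counit_def lin_def)
  then show ?thesis by (simp add: dual_map_def dual_unit_def vec_eq_iff)
qed

lemma dual_map_mult:
  assumes "coalgebra_map c eps t"
  shows "dual_map t (dual_mult c x y) = dual_mult c (dual_map t x) (dual_map t y)"
proof -
  have comul_basis: "(\<Sum>m\<in>UNIV. t m i * c m a b) = (\<Sum>j\<in>UNIV. \<Sum>l\<in>UNIV. t a j * t b l * c i j l)"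
    for i a b
  proof -
    have "comul c (lin t (\<lambda>k. if k = i then 1 else 0)) a b
        = lin_tensor t (comul c (\<lambda>k. if k = i then 1 else 0)) a b"
      using assms by (simp add: coalgebra_map_def)
    then show ?thesis by (simp add: comul_def lin_def lin_tensor_def)
  qed
  have "dual_map t (dual_mult c x y) $ i = dual_mult c (dual_map t x) (dual_map t y) $ i" for i
  proof -
    have "dual_map t (dual_mult c x y) $ i
        = (\<Sum>m\<in>UNIV. \<Sum>a\<in>UNIV. \<Sum>b\<in>UNIV. t m i * c m a b * (x $ a * y $ b))"
      by (simp add: dual_map_def dual_mult_def sum_distrib_left mult_ac)
    also have "\<dots> = (\<Sum>a\<in>UNIV. \<Sum>b\<in>UNIV. (\<Sum>m\<in>UNIV. t m i * c m a b) * (x $ a * y $ b))"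
      by (subst sum_cycle3) (simp only: sum_distrib_right)
    also have "\<dots> = (\<Sum>a\<in>UNIV. \<Sum>b\<in>UNIV. \<Sum>j\<in>UNIV. \<Sum>l\<in>UNIV. t a j * t b l * c i j l * (x $ a * y $ b))"
      by (simp only: comul_basis sum_distrib_right)
    also have "\<dots> = (\<Sum>j\<in>UNIV. \<Sum>l\<in>UNIV. \<Sum>a\<in>UNIV. \<Sum>b\<in>UNIV. t a j * t b l * c i j l * (x $ a * y $ b))"
      by (subst (1 2) sum_cycle4) (rule refl)
    also have "\<dots> = dual_mult c (dual_map t x) (dual_map t y) $ i"
      by (simp add: dual_map_def dual_mult_def sum_distrib_left sum_distrib_right mult_ac)
    finally show ?thesis .
  qed
  then show ?thesis by (simp add: vec_eq_iff)
qed

lemma vec_subspace_vec_nth_vimage: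
  fixes D :: "('i::finite \<Rightarrow> 'k::field) set"
  assumes "is_subspace D"
  shows "vec.subspace (vec_nth -` D)"
proof -
  have "vec_nth (0::'k^'i) = (\<lambda>_. 0)"
    "vec_nth (w1 + w2) = (\<lambda>i. vec_nth w1 i + vec_nth w2 i)"
    "vec_nth (a *s w1) = (\<lambda>i. a * vec_nth w1 i)" for a and w1 w2 :: "'k^'i"
    by (simp_all add: fun_eq_iff)
  then show ?thesis using assms unfolding vec.subspace_def is_subspace_def by auto
qed

lemma sum_in_subspace:
  assumes D: "is_subspace D" and "finite A" and "\<forall>l\<in>A. g l \<in> D"
  shows "(\<lambda>j. \<Sum>l\<in>A. g l j) \<in> D"
  using assms(2,3)
proof (induct A rule: finite_induct)
  case empty then show ?case using D by (simp add: is_subspace_def)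
next
  case (insert x F)
  have "\<forall>y\<in>D. \<forall>y'\<in>D. (\<lambda>i. y i + y' i) \<in> D" using D by (simp add: is_subspace_def)
  then have "(\<lambda>i. g x i + (\<Sum>l\<in>F. g l i)) \<in> D" using insert by simp
  then show ?case using insert by simp
qed

lemma tensor_sq_sum:
  fixes g h :: "'i::finite \<Rightarrow> 'i \<Rightarrow> 'k::field"
  assumes D: "is_subspace D" and g: "\<And>l. g l \<in> D" and h: "\<And>l. h l \<in> D"
  shows "(\<lambda>j l'. \<Sum>l\<in>UNIV. g l j * h l l') \<in> tensor_sq D"
proof -
  define E where "E = h ` UNIV"
  define G where "G e = (\<lambda>j. \<Sum>l\<in>{l. h l = e}. g l j)" for e
  define F where "F = (\<lambda>e. (G e, e)) ` E"
  have G_in_D: "G e \<in> D" for e unfolding G_def by (rule sum_in_subspace[OF D]) (auto simp: g)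
  have "finite F" "F \<subseteq> D \<times> D" using G_in_D h by (auto simp: F_def E_def)
  moreover have "(\<lambda>j l'. \<Sum>l\<in>UNIV. g l j * h l l') = (\<lambda>j l'. \<Sum>(d, e)\<in>F. d j * e l')"
  proof (intro ext)
    fix j l'
    have "(\<Sum>(d, e)\<in>F. d j * e l') = (\<Sum>e\<in>E. G e j * e l')"
      unfolding F_def by (subst sum.reindex) (auto simp: inj_on_def)
    also have "\<dots> = (\<Sum>e\<in>E. \<Sum>l\<in>{l. h l = e}. g l j * h l l')"
      unfolding G_def sum_distrib_right by (intro sum.cong refl) auto
    also have "\<dots> = (\<Sum>l\<in>UNIV. g l j * h l l')"
      using sum.image_gen[of UNIV "\<lambda>l. g l j * h l l'" h] by (simp add: E_def)
    finally show "(\<Sum>l\<in>UNIV. g l j * h l l') = (\<Sum>(d, e)\<in>F. d j * e l')" by simp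
  qed
  ultimately show ?thesis unfolding tensor_sq_def by blast
qed

text \<open>Expand every row of \<open>M\<close> through a projection \<open>pr\<close> onto \<open>D\<close>:
  \<open>M = \<Sum>\<^sub>l (column l of M) \<otimes> pr(e\<^sub>l)\<close>.\<close>

lemma tensor_sq_if_rows_columns:
  fixes M :: "'i::finite \<Rightarrow> 'i \<Rightarrow> 'k::field"
  assumes D: "is_subspace D"
    and columns: "\<And>l. (\<lambda>j. M j l) \<in> D" and rows: "\<And>j. (\<lambda>l. M j l) \<in> D"
  shows "M \<in> tensor_sq D"
proof -
  let ?V = "vec_nth -` D :: ('k^'i) set"
  obtain pr where pr: "range pr \<subseteq> ?V" "Vector_Spaces.linear (*s) (*s) pr" "\<forall>v\<in>?V. pr v = v"
    using vec.linear_exists_left_inverse_on[OF vec.linear_id vec_subspace_vec_nth_vimage[OF D]]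
    by auto
  have "M = (\<lambda>j l'. \<Sum>l\<in>UNIV. M j l * pr (axis l 1) $ l')"
  proof (intro ext)
    fix j l'
    have "(\<chi> l. M j l) \<in> ?V" using rows[of j] by (simp add: vec_lambda_inverse)
    then have "(\<chi> l. M j l) = pr (\<Sum>l\<in>UNIV. M j l *s axis l 1)"
      using pr(3) basis_expansion[of "\<chi> l. M j l"] by simp
    also have "\<dots> = (\<Sum>l\<in>UNIV. M j l *s pr (axis l 1))"
      by (simp add: vec.linear_sum[OF pr(2)] vec.linear_scale[OF pr(2)])
    finally have "(\<chi> l. M j l) $ l' = (\<Sum>l\<in>UNIV. M j l *s pr (axis l 1)) $ l'" by simp
    then show "M j l' = (\<Sum>l\<in>UNIV. M j l * pr (axis l 1) $ l')" by (simp add: sum_component)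
  qed
  also have "\<dots> \<in> tensor_sq D"
    using tensor_sq_sum[OF D, of "\<lambda>l j. M j l" "\<lambda>l. vec_nth (pr (axis l 1))"] columns pr(1)
    by auto
  finally show ?thesis .
qed

definition annihilator :: "('k::field^'i::finite) set \<Rightarrow> ('i \<Rightarrow> 'k) set" where
  "annihilator J = {z. \<forall>\<phi>\<in>J. (\<Sum>i\<in>UNIV. \<phi> $ i * z i) = 0}"

lemma is_subspace_annihilator: "is_subspace (annihilator J)"
  unfolding is_subspace_def annihilator_def
  by (simp add: algebra_simps sum.distrib sum_distrib_left[symmetric])

lemma annihilator_separates:
  fixes x :: "'k::field^'i::finite"
  assumes "vec.subspace J" and "x \<notin> J"
  shows "\<exists>z\<in>annihilator J. (\<Sum>i\<in>UNIV. x $ i * z i) \<noteq> 0"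
proof -
  obtain B where B: "B \<subseteq> J" "vec.independent B" "J \<subseteq> vec.span B"
    by (rule vec.maximal_independent_subset)
  have span_B: "vec.span B = J" using vec.span_subspace[OF B(1,3) assms(1)] .
  have "vec.independent (insert x B)"
    using vec.independent_insertI[OF _ B(2)] assms(2) span_B by simp
  then obtain h where h: "Vector_Spaces.linear (*s) (*s) h"
    and h_basis: "\<forall>y\<in>insert x B. h y = (if y = x then axis undefined 1 else 0)"
    using vec.linear_independent_extend[of _ "\<lambda>y. if y = x then axis undefined 1 else 0"] by blast
  define z where "z i = h (axis i 1) $ undefined" for i
  have h_z: "h y $ undefined = (\<Sum>i\<in>UNIV. y $ i * z i)" for y
  proof -
    have "h y = (\<Sum>i\<in>UNIV. y $ i *s h (axis i 1))"
      by (subst basis_expansion[symmetric, of y])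
        (simp add: vec.linear_sum[OF h] vec.linear_scale[OF h])
    then show ?thesis by (simp add: z_def)
  qed
  have "h b = 0" if "b \<in> B" for b
    using h_basis that B(1) assms(2) by auto
  then have "h y = 0" if "y \<in> J" for y
    using vec.linear_eq_0_on_span[OF h, of B y] that span_B by blast
  then have "z \<in> annihilator J" by (simp add: annihilator_def h_z[symmetric])
  moreover have "(\<Sum>i\<in>UNIV. x $ i * z i) = 1" using h_basis by (simp add: h_z[symmetric])
  ultimately show ?thesis by (intro bexI[of _ z]) simp_all
qed

text \<open>The rows and columns of \<open>\<Delta> z\<close> are annihilated by \<open>J\<close> because \<open>J\<close> absorbs
  multiplication by the coordinate functionals.\<close>

lemma annihilator_of_ideal_subcoalgebra:
  assumes "vec.subspace J"
    and left: "\<And>a s. s \<in> J \<Longrightarrow> dual_mult c a s \<in> J"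
    and right: "\<And>a s. s \<in> J \<Longrightarrow> dual_mult c s a \<in> J"
  shows "is_subcoalgebra c (annihilator J)"
proof -
  have "comul c z \<in> tensor_sq (annihilator J)" if z: "z \<in> annihilator J" for z
  proof (rule tensor_sq_if_rows_columns[OF is_subspace_annihilator])
    fix l
    have "(\<Sum>j\<in>UNIV. \<phi> $ j * comul c z j l) = (\<Sum>i\<in>UNIV. dual_mult c \<phi> (axis l 1) $ i * z i)" for \<phi>
      unfolding dual_mult_axis_right comul_def
      by (simp add: sum_distrib_left sum_distrib_right mult_ac) (rule sum.swap)
    then show "(\<lambda>j. comul c z j l) \<in> annihilator J"
      using z right by (simp add: annihilator_def)
  next
    fix j
    have "(\<Sum>l\<in>UNIV. \<phi> $ l * comul c z j l) = (\<Sum>i\<in>UNIV. dual_mult c (axis j 1) \<phi> $ i * z i)" for \<phi>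
      unfolding dual_mult_axis_left comul_def
      by (simp add: sum_distrib_left sum_distrib_right mult_ac) (rule sum.swap)
    then show "(\<lambda>l. comul c z j l) \<in> annihilator J"
      using z left by (simp add: annihilator_def)
  qed
  then show ?thesis by (simp add: is_subcoalgebra_def is_subspace_annihilator)
qed

lemma sandwich_span_mult_closed:
  assumes coa: "is_coalgebra c eps"
    and "s \<in> vec.span {dual_mult c (dual_mult c a x) b | a b. True}" (is "s \<in> ?J")
  shows "dual_mult c a s \<in> ?J \<and> dual_mult c s a \<in> ?J"
  using assms(2)
proof (induct rule: vec.span_induct_alt)
  case (step r g y)
  then obtain a' b where g: "g = dual_mult c (dual_mult c a' x) b" by auto
  have "dual_mult c a g = dual_mult c (dual_mult c (dual_mult c a a') x) b"
    and "dual_mult c g a = dual_mult c (dual_mult c a' x) (dual_mult c b a)"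
    by (simp_all add: g dual_mult_assoc[OF coa])
  then have "dual_mult c a g \<in> ?J" and "dual_mult c g a \<in> ?J" by (auto intro: vec.span_base)
  then show ?case
    using step by (simp add: dual_mult_add_left dual_mult_add_right dual_mult_scale_left
        dual_mult_scale_right vec.span_add vec.span_scale)
qed (simp add: dual_mult_zero_left dual_mult_zero_right vec.span_zero)

lemma simple_coalgebra_dual_ideal_contains_unit:
  assumes sc: "simple_coalgebra c eps" and "x \<noteq> 0"
  shows "dual_unit eps \<in> vec.span {dual_mult c (dual_mult c a x) b | a b. True}"
proof (rule ccontr)
  have coa: "is_coalgebra c eps" using sc by (simp add: simple_coalgebra_def)
  define J where "J = vec.span {dual_mult c (dual_mult c a x) b | a b. True}"
  assume "dual_unit eps \<notin> vec.span {dual_mult c (dual_mult c a x) b | a b. True}"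
  then have "dual_unit eps \<notin> J" by (simp add: J_def)
  have left: "dual_mult c a s \<in> J" and right: "dual_mult c s a \<in> J" if "s \<in> J" for a s
    using sandwich_span_mult_closed[OF coa, of s x a] that by (simp_all add: J_def)
  have "is_subcoalgebra c (annihilator J)"
    by (rule annihilator_of_ideal_subcoalgebra[OF _ left right]) (simp add: J_def vec.subspace_span)
  moreover have "annihilator J \<noteq> UNIV"
  proof
    assume "annihilator J = UNIV"
    then have "(\<lambda>j. if j = i then 1 else 0) \<in> annihilator J" for i by simp
    moreover have "x = dual_mult c (dual_mult c (dual_unit eps) x) (dual_unit eps)"
      by (simp add: dual_unit_left[OF coa] dual_unit_right[OF coa])
    then have "x \<in> J" unfolding J_def by (intro vec.span_base) blast
    ultimately have "x $ i = 0" for i by (simp add: annihilator_def)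
    then show False using \<open>x \<noteq> 0\<close> by (simp add: vec_eq_iff)
  qed
  moreover have "annihilator J \<noteq> {\<lambda>_. 0}"
  proof -
    obtain z where "z \<in> annihilator J" "(\<Sum>i\<in>UNIV. dual_unit eps $ i * z i) \<noteq> 0"
      using annihilator_separates[OF _ \<open>dual_unit eps \<notin> J\<close>] by (auto simp: J_def vec.subspace_span)
    then show ?thesis by auto
  qed
  ultimately show False using sc unfolding simple_coalgebra_def by blast
qed

lemma simple_algebra_dual:
  assumes "simple_coalgebra c eps" and "alg_closed TYPE('k::field)"
  shows "simple_algebra (dual_mult c) (dual_unit eps :: 'k^'i::finite)"
proof -
  have "is_coalgebra c eps" using assms(1) by (simp add: simple_coalgebra_def)
  then show ?thesis
  proof unfold_locales
    fix x :: "'k^'i"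
    assume "x \<noteq> 0"
    then show "dual_unit eps \<in> vec.span {dual_mult c (dual_mult c a x) b | a b. True}"
      by (rule simple_coalgebra_dual_ideal_contains_unit[OF assms(1)])
  qed (simp_all add: dual_mult_assoc dual_mult_add_left dual_mult_add_right dual_mult_scale_left
      dual_mult_scale_right dual_unit_left dual_unit_right assms(2))
qed

lemma lin_involutive_if_dual_map_involutive:
  assumes "\<And>y. dual_map t (dual_map t y) = y"
  shows "lin t \<circ> lin t = id"
proof -
  have delta: "(\<Sum>j\<in>UNIV. t m j * t j i) = (if m = i then 1 else 0)" for m i
  proof -
    have "dual_map t (dual_map t (axis m 1)) $ i = axis m 1 $ i" by (simp add: assms)
    then show ?thesis by (simp add: dual_map_def axis_def mult.commute)
  qed
  have "lin t (lin t x) a = x a" for x a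
  proof -
    have "lin t (lin t x) a = (\<Sum>j\<in>UNIV. \<Sum>m\<in>UNIV. t a j * t j m * x m)"
      by (simp add: lin_def sum_distrib_left mult.assoc)
    also have "\<dots> = (\<Sum>m\<in>UNIV. (\<Sum>j\<in>UNIV. t a j * t j m) * x m)"
      by (subst sum.swap) (simp add: sum_distrib_right)
    also have "\<dots> = x a" by (simp add: delta)
    finally show ?thesis .
  qed
  then show ?thesis by (simp add: fun_eq_iff)
qed

lemma trace_eq_card_if_lin_id:
  fixes t :: "'i::finite \<Rightarrow> 'i \<Rightarrow> 'k::field"
  assumes "lin t = id"
  shows "trace t = of_nat CARD('i)"
proof -
  have "t i m = (if i = m then 1 else 0)" for i m :: 'i
    using fun_cong[OF fun_cong[OF assms, of "\<lambda>k. if k = m then 1 else 0"], of i]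
    by (simp add: lin_def)
  then show ?thesis by (simp add: trace_def)
qed

lemma ord_eq_2:
  assumes "f \<circ> f = id" and "f \<noteq> id"
  shows "ord f = 2"
  unfolding ord_def
proof (rule Least_equality)
  show "0 < (2::nat) \<and> f ^^ 2 = id" using assms(1) by (simp add: numeral_2_eq_2)
  show "2 \<le> n" if "0 < n \<and> f ^^ n = id" for n
    using that assms(2) by (cases "n = 1") auto
qed

theorem lemma2p2:
  fixes c :: "'i::finite \<Rightarrow> 'i \<Rightarrow> 'i \<Rightarrow> 'k::field_char_0"
    and eps :: "'i \<Rightarrow> 'k"
    and t :: "'i \<Rightarrow> 'i \<Rightarrow> 'k"
  assumes "alg_closed TYPE('k)"
    and "card (UNIV :: 'i set) = 4"
    and "simple_coalgebra c eps"
    and "coalgebra_aut c eps t"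
    and "finite_order (lin t)"
    and "trace t = 0"
  shows "ord (lin t) = 2"
proof -
  interpret simple_algebra "dual_mult c" "dual_unit eps :: 'k^'i"
    using simple_algebra_dual[OF assms(3,1)] .
  have hom: "coalgebra_map c eps t" using assms(4) by (simp add: coalgebra_aut_def)
  have "dual_map t (dual_map t y) = y" for y
    by (rule involutive_if_endo_trace_zero[OF assms(2) linear_dual_map dual_map_mult[OF hom]
          dual_map_unit[OF hom]]) (simp add: endo_trace_dual_map assms(6))
  then have "lin t \<circ> lin t = id" by (rule lin_involutive_if_dual_map_involutive)
  moreover have "lin t \<noteq> id" using trace_eq_card_if_lin_id assms(2,6) by force
  ultimately show ?thesis by (rule ord_eq_2)
qed

end
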